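(* Let $n,m\ge 1$, $Q=\{1,\dots,n\}$ and $D=\{1,\dots,m\}$. Consider any MCT circuit $(g_1,\dots,g_m)$ on qubits $Q$ (as defined in the context) to which at least one of Swap 1, Swap 2, Swap 3 applies. Then, by applying Swap 1, Swap 2 and Swap 3 repeatedly (finitely many times), this circuit can be turned into an unswappable circuit.
   Context: An MCT circuit on qubits $Q=\{1,\dots,n\}$ with $m$ gate positions is a sequence $(g_1,\dots,g_m)$, where each gate $g_d$ ($d\in D=\{1,\dots,m\}$) is either empty, or consists of exactly one target qubit $t(g_d)\in Q$ together with a set $C(g_d)\subseteq Q\setminus\{t(g_d)\}$ of control qubits. (Equivalently, with binary variables $t_q^d$ indicating that $q$ is the target of gate $d$ and $w_q^d$ indicating that $q$ is a control of gate $d$: $t_q^d+w_q^d\le 1$, $\sum_q t_q^d\le 1$, and a gate with no target has no controls.) The following operations each exchange two consecutive gates $g_d$ and $g_{d+1}$ (for $d\in\{1,\dots,m-1\}$): Swap 1 (empty gate): if $g_d$ is empty and $g_{d+1}$ is not empty, swap $g_d$ and $g_{d+1}$. Swap 2 (different target): if $g_d$ has target $q$ and $g_{d+1}$ has target $r$ with $q>r$, and $q\notin C(g_{d+1})$ and $r\notin C(g_d)$, swap $g_d$ and $g_{d+1}$. Swap 3 (same target): if $g_d$ and $g_{d+1}$ have the same target qubit and $|C(g_d)|<|C(g_{d+1})|$, swap $g_d$ and $g_{d+1}$. A circuit is called swappable if at least one of Swap 1, Swap 2, Swap 3 can be applied to it (for some $d$), and unswappable otherwise. *)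

theory Defs
  imports Main
begin

text \<open>A gate is either empty (None) or Some (t, C) with target t and control set C.\<close>
type_synonym gate = "(nat \<times> nat set) option"

definition wf_gate :: "nat \<Rightarrow> gate \<Rightarrow> bool" where
  "wf_gate n g = (case g of None \<Rightarrow> True
     | Some (t, C) \<Rightarrow> t \<in> {1..n} \<and> C \<subseteq> {1..n} - {t})"

text \<open>An MCT circuit on qubits {1..n} with m gate positions: a list of m well-formed gates.
  List positions are 0-based: position d of the list is gate g_(d+1).\<close>
definition mct_circuit :: "nat \<Rightarrow> nat \<Rightarrow> gate list \<Rightarrow> bool" where
  "mct_circuit n m c = (length c = m \<and> (\<forall>g\<in>set c. wf_gate n g))"

definition swap1_cond :: "gate \<Rightarrow> gate \<Rightarrow> bool" where
  "swap1_cond g h = (g = None \<and> h \<noteq> None)"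

definition swap2_cond :: "gate \<Rightarrow> gate \<Rightarrow> bool" where
  "swap2_cond g h = (\<exists>q Cq r Cr. g = Some (q, Cq) \<and> h = Some (r, Cr) \<and> q > r
      \<and> q \<notin> Cr \<and> r \<notin> Cq)"

definition swap3_cond :: "gate \<Rightarrow> gate \<Rightarrow> bool" where
  "swap3_cond g h = (\<exists>q Cg Ch. g = Some (q, Cg) \<and> h = Some (q, Ch) \<and> card Cg < card Ch)"

definition swap_step :: "gate list \<Rightarrow> gate list \<Rightarrow> bool" where
  "swap_step c c' = (\<exists>d. Suc d < length c
      \<and> (swap1_cond (c ! d) (c ! Suc d) \<or> swap2_cond (c ! d) (c ! Suc d)
         \<or> swap3_cond (c ! d) (c ! Suc d))
      \<and> c' = c[d := c ! Suc d, Suc d := c ! d])"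

definition swappable :: "gate list \<Rightarrow> bool" where
  "swappable c = (\<exists>c'. swap_step c c')"

end

theory Submission
  imports Defs
begin

text \<open>Rank every gate so that each of Swap 1, 2, 3 moves a gate of strictly smaller rank in
  front of a gate of larger rank: empty gates rank last, the others by target and then by
  decreasing number of controls, encoded as n - |C|, which is strictly antitone in |C|
  because |C| \<le> n for well-formed gates. A swap therefore makes the rank
  sequence of the circuit lexicographically smaller while keeping its length, and since
  lexicographic order on sequences of fixed length over a well-founded order is
  well-founded, repeated swapping must stop.\<close>

lemma wf_exists_normal_form:
  assumes "wf S"
    and step: "\<And>x y. P x \<Longrightarrow> R x y \<Longrightarrow> P y \<and> (f y, f x) \<in> S"
    and "P x"
  shows "\<exists>y. R\<^sup>*\<^sup>* x y \<and> \<not> (\<exists>z. R y z)"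
  using \<open>P x\<close>
proof (induction x rule: wf_induct_rule[OF wf_inv_image[OF \<open>wf S\<close>, of f]])
  case (1 x)
  show ?case
  proof (cases "\<exists>z. R x z")
    case True
    then obtain z where "R x z" ..
    with 1 step obtain y where "R\<^sup>*\<^sup>* z y" "\<not> (\<exists>w. R y w)"
      by (meson in_inv_image)
    with \<open>R x z\<close> show ?thesis
      by (meson converse_rtranclp_into_rtranclp)
  qed blast
qed

definition swap_cond :: "gate \<Rightarrow> gate \<Rightarrow> bool" where
  "swap_cond g h \<longleftrightarrow> swap1_cond g h \<or> swap2_cond g h \<or> swap3_cond g h"

lemma swap_stepE:
  assumes "swap_step c c'"
  obtains xs a b ys where "c = xs @ a # b # ys" "c' = xs @ b # a # ys" "swap_cond a b"
proof -
  obtain d where d: "Suc d < length c" and cond: "swap_cond (c ! d) (c ! Suc d)"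
    and c': "c' = c[d := c ! Suc d, Suc d := c ! d]"
    using assms unfolding swap_step_def swap_cond_def by blast
  define xs where "xs = take d c"
  define ys where "ys = drop (Suc (Suc d)) c"
  have c: "c = xs @ c ! d # c ! Suc d # ys"
    unfolding xs_def ys_def using d
    by (metis Cons_nth_drop_Suc Suc_lessD append_take_drop_id)
  have "length xs = d"
    using d by (simp add: xs_def)
  then have "c' = xs @ c ! Suc d # c ! d # ys"
    unfolding c' by (subst c) (simp add: list_update_append)
  with c cond show thesis
    using that by blast
qed

definition gate_rank :: "nat \<Rightarrow> gate \<Rightarrow> nat \<times> nat" where
  "gate_rank n g = (case g of None \<Rightarrow> (Suc n, 0) | Some (t, C) \<Rightarrow> (t, n - card C))"

abbreviation rank_order :: "((nat \<times> nat) \<times> (nat \<times> nat)) set" where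
  "rank_order \<equiv> less_than <*lex*> less_than"

lemma wf_gate_bounds:
  assumes "wf_gate n (Some (t, C))"
  shows "t \<le> n" and "card C \<le> n"
proof -
  show "t \<le> n"
    using assms by (simp add: wf_gate_def)
  have "C \<subseteq> {1..n}"
    using assms by (auto simp: wf_gate_def)
  then show "card C \<le> n"
    using card_mono[of "{1..n}" C] by simp
qed

lemma gate_rank_swap_less:
  assumes "wf_gate n h" and "swap_cond g h"
  shows "(gate_rank n h, gate_rank n g) \<in> rank_order"
  using assms(2) unfolding swap_cond_def
proof (elim disjE)
  assume "swap1_cond g h"
  then obtain t C where "g = None" and "h = Some (t, C)"
    by (auto simp: swap1_cond_def)
  with wf_gate_bounds(1) assms(1) show ?thesis
    by (fastforce simp: gate_rank_def)
next
  assume "swap2_cond g h"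
  then show ?thesis
    by (auto simp: swap2_cond_def gate_rank_def)
next
  assume "swap3_cond g h"
  then obtain q Cg Ch where "g = Some (q, Cg)" and h: "h = Some (q, Ch)" and "card Cg < card Ch"
    by (auto simp: swap3_cond_def)
  moreover have "card Ch \<le> n"
    using wf_gate_bounds(2) assms(1) h by blast
  ultimately show ?thesis
    by (simp add: gate_rank_def)
qed

lemma swap_step_set_eq: "swap_step c c' \<Longrightarrow> set c' = set c"
  by (elim swap_stepE) auto

lemma swap_step_rank_lenlex:
  assumes "\<forall>g\<in>set c. wf_gate n g" and "swap_step c c'"
  shows "(map (gate_rank n) c', map (gate_rank n) c) \<in> lenlex rank_order"
  using assms(2)
proof (elim swap_stepE)
  fix xs a b ys
  assume c: "c = xs @ a # b # ys" and c': "c' = xs @ b # a # ys" and "swap_cond a b"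
  then have "(gate_rank n b, gate_rank n a) \<in> rank_order"
    using assms(1) gate_rank_swap_less by simp
  then have "([gate_rank n b, gate_rank n a], [gate_rank n a, gate_rank n b]) \<in> lenlex rank_order"
    by (simp add: Cons_lenlex_iff)
  then have "([gate_rank n b, gate_rank n a] @ map (gate_rank n) ys,
      [gate_rank n a, gate_rank n b] @ map (gate_rank n) ys) \<in> lenlex rank_order"
    by (rule lenlex_append1) simp
  then show ?thesis
    unfolding c c' by (simp add: irrefl_def)
qed

theorem proposition1:
  fixes n m :: nat and c :: "gate list"
  assumes "n \<ge> 1" and "m \<ge> 1"
    and "mct_circuit n m c"
    and "swappable c"
  shows "\<exists>c'. swap_step\<^sup>*\<^sup>* c c' \<and> \<not> swappable c'"
proof -
  have "\<exists>c'. swap_step\<^sup>*\<^sup>* c c' \<and> \<not> (\<exists>c''. swap_step c' c'')"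
  proof (rule wf_exists_normal_form[where P = "\<lambda>c. \<forall>g\<in>set c. wf_gate n g"
        and f = "map (gate_rank n)"])
    show "wf (lenlex rank_order)"
      by blast
    show "\<forall>g\<in>set c. wf_gate n g"
      using assms(3) by (simp add: mct_circuit_def)
  qed (metis swap_step_set_eq swap_step_rank_lenlex)
  then show ?thesis
    by (simp add: swappable_def)
qed

end
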